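(* For every integer $n\ge0$, $$\sum_{m\ge0}\frac{m^n}{n+1}\binom{m+n}{m}t^m=\frac{\overline{Q}_n(t)}{(1-t)^{2n+1}},$$ where $\overline{Q}_n(t)=\sum_{\pi}t^{\operatorname{des}(\pi)}$, the sum ranging over all quasi-Stirling permutations $\pi$ of size $n$.
   Context: A quasi-Stirling permutation of size $n$ is a permutation $\pi_1\cdots\pi_{2n}$ of the multiset $\{1,1,2,2,\dots,n,n\}$ with no indices $i<j<k<\ell$ such that $\pi_i=\pi_k$ and $\pi_j=\pi_\ell$ (for $n=0$ only the empty permutation). For a sequence $\pi_1\cdots\pi_r$, an index $i\in\{1,\dots,r\}$ is a descent if $\pi_i>\pi_{i+1}$ or $i=r$, and $\operatorname{des}$ counts descents. The identity is one of formal power series in $t$, with the convention $0^0=1$. *)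

theory Defs
  imports Main "HOL-Library.Multiset" "HOL-Computational_Algebra.Formal_Power_Series"
begin

definition quasi_stirling :: "nat \<Rightarrow> nat list set" where
  "quasi_stirling n = {w. mset w = mset [1..<n+1] + mset [1..<n+1] \<and>
     \<not> (\<exists>i j k l. i < j \<and> j < k \<and> k < l \<and> l < length w \<and>
            w ! i = w ! k \<and> w ! j = w ! l)}"

text \<open>Descents: position i (1-based, 1..r) is a descent if w_i > w_{i+1} or i = r.
  Here positions are 0-based: i < length w.\<close>
definition des :: "nat list \<Rightarrow> nat" where
  "des w = card {i. i < length w \<and> (i = length w - 1 \<or> w ! i > w ! (i + 1))}"

definition Qbar :: "nat \<Rightarrow> rat fps" where
  "Qbar n = (\<Sum>w\<in>quasi_stirling n. fps_X ^ des w)"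

end

theory Submission
  imports Defs "HOL-Computational_Algebra.Formal_Laurent_Series" "HOL-Library.Product_Lexorder"
begin

(* Expanding 1 / (1 - t)^(2n+1), the coefficient of t^m on the right-hand side counts pairs of a
   quasi-Stirling permutation w and a weakly increasing colouring of its letters by 0, ..., m - 1
   that increases strictly at every descent of w. Sorting the (colour, letter) pairs, these are
   the same as noncrossing arc diagrams: letter a becomes an arc between its two colours, and the
   quasi-Stirling condition says exactly that no two arcs cross when endpoints are ordered by
   colour and then by letter. Removing the arc of the smallest letter gives a recurrence for the
   number of diagrams, which m^n / (n + 1) * binomial (m + n) m satisfies; the convolution
   identity this needs is the coefficient of y^(n+2) in the square of the compositional inverse
   of y (1 - t e^y), computed by Lagrange inversion. *)

section \<open>Lagrange inversion\<close>

lemma fps_power_log_deriv_nth_eq_0: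
  fixes F :: "'a::field_char_0 fps"
  assumes F0: "F $ 0 \<noteq> 0" and j: "j \<ge> 1"
  shows "(F ^ j * (1 - fps_X * fps_deriv F * inverse F)) $ j = 0"
proof -
  have pow: "F ^ j = F ^ (j - 1) * F" using j by (simp flip: power_Suc2)
  have "F ^ j * (1 - fps_X * fps_deriv F * inverse F)
      = F ^ j - fps_X * (F ^ (j - 1) * fps_deriv F) * (F * inverse F)"
    unfolding pow by (simp add: algebra_simps)
  also have "\<dots> = F ^ j - fps_X * (fps_const (1 / of_nat j) * fps_deriv (F ^ j))"
    using F0 j by (simp add: inverse_mult_eq_1' fps_deriv_power algebra_simps flip: fps_const_mult)
  finally show ?thesis
    using j by (simp add: fps_X_power_mult_nth[of 1, simplified])
qed

lemma fps_deriv_power_X_div_times_power_nth: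
  fixes F :: "'a::field_char_0 fps"
  assumes F0: "F $ 0 \<noteq> 0" and "n \<le> N" "1 \<le> N"
  shows "(fps_deriv ((fps_X * inverse F) ^ n) * F ^ N) $ (N - 1) = (if n = N then of_nat N else 0)"
proof (cases "n = 0")
  case True
  then show ?thesis using assms by simp
next
  case False
  define G where "G = inverse F"
  have GF: "G * F = 1" using F0 unfolding G_def by (simp add: inverse_mult_eq_1)
  have dG: "fps_deriv G = - fps_deriv F * G ^ 2" using F0 unfolding G_def by (simp add: fps_inverse_deriv)
  have pw: "G ^ n * F ^ n = 1" using GF by (metis power_mult_distrib power_one)
  have FN: "F ^ N = F ^ n * F ^ (N - n)" using \<open>n \<le> N\<close> by (simp flip: power_add)
  have Gn: "G ^ (n - 1) * G = G ^ n" using False by (simp flip: power_Suc2)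
  have "fps_deriv ((fps_X * G) ^ n) = fps_const (of_nat n) * fps_deriv (fps_X * G) * (fps_X * G) ^ (n - 1)"
    by (simp add: fps_deriv_power)
  then have "fps_deriv ((fps_X * G) ^ n) * F ^ N
      = fps_const (of_nat n) * (fps_X ^ (n - 1) * (G ^ (n - 1) * (G + fps_X * fps_deriv G) * F ^ N))"
    by (simp add: power_mult_distrib algebra_simps)
  also have "G ^ (n - 1) * (G + fps_X * fps_deriv G) * F ^ N
      = (G ^ n * F ^ n) * F ^ (N - n) * (1 - fps_X * fps_deriv F * G)"
    unfolding dG FN using Gn by (simp add: algebra_simps power2_eq_square)
  finally have "(fps_deriv ((fps_X * G) ^ n) * F ^ N) $ (N - 1)
      = of_nat n * (F ^ (N - n) * (1 - fps_X * fps_deriv F * G)) $ (N - n)"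
    using assms False by (simp add: pw fps_X_power_mult_nth)
  moreover have "(F ^ (N - n) * (1 - fps_X * fps_deriv F * G)) $ (N - n) = (if n = N then 1 else 0)"
    using fps_power_log_deriv_nth_eq_0[OF F0, of "N - n"] \<open>n \<le> N\<close> unfolding G_def by auto
  ultimately show ?thesis unfolding G_def by simp
qed

text \<open>Write \<open>X^k = T^k \<circ> a\<close> with \<open>a = X / F\<close> and truncate the expansion in powers of \<open>a\<close> at
  order \<open>N\<close>; after differentiating and multiplying by \<open>F^N\<close>, the coefficient of \<open>X^(N-1)\<close>
  only sees the term \<open>a^N\<close> (previous lemma).\<close>

lemma fps_lagrange_inversion:
  fixes F :: "'a::field_char_0 fps"
  assumes F0: "F $ 0 \<noteq> 0" and k: "1 \<le> k" "k \<le> N"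
  shows "of_nat N * (fps_inv (fps_X * inverse F) ^ k) $ N = of_nat k * (F ^ N) $ (N - k)"
proof -
  define a where "a = fps_X * inverse F"
  define c where "c n = (fps_inv a ^ k) $ n" for n
  define S where "S = (\<Sum>n=0..N. fps_const (c n) * a ^ n)"
  have a0: "a $ 0 = 0" by (simp add: a_def)
  have a1: "a $ 1 \<noteq> 0" using F0 by (simp add: a_def)
  have comp: "fps_inv a ^ k oo a = fps_X ^ k"
    using fps_compose_power[OF a0, of "fps_inv a" k] fps_inv[OF a0 a1] by simp
  have S_nth: "S $ j = (fps_X ^ k) $ j" if "j \<le> N" for j
  proof -
    have "(fps_X ^ k) $ j = (fps_inv a ^ k oo a) $ j" by (simp add: comp)
    also have "\<dots> = (\<Sum>i=0..j. c i * (a ^ i) $ j)" by (simp add: fps_compose_nth c_def)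
    also have "\<dots> = (\<Sum>i=0..N. c i * (a ^ i) $ j)"
      by (rule sum.mono_neutral_left) (use that startsby_zero_power_prefix[OF a0] in auto)
    also have "\<dots> = S $ j" by (simp add: S_def fps_sum_nth)
    finally show ?thesis by simp
  qed
  have "(fps_deriv (fps_X ^ k - S) * F ^ N) $ (N - 1) = 0"
    unfolding fps_mult_nth using S_nth[of "Suc _"] k by (intro sum.neutral) auto
  then have "(fps_deriv (fps_X ^ k) * F ^ N) $ (N - 1) = (fps_deriv S * F ^ N) $ (N - 1)"
    by (simp add: algebra_simps)
  moreover have "fps_deriv (fps_X ^ k) * F ^ N = fps_const (of_nat k) * (fps_X ^ (k - 1) * F ^ N)"
    by (simp add: fps_deriv_power mult.assoc)
  then have "(fps_deriv (fps_X ^ k) * F ^ N) $ (N - 1) = of_nat k * (F ^ N) $ (N - k)"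
    using k by (simp only: fps_mult_left_const_nth fps_X_power_mult_nth) (simp add: diff_diff_eq2)
  moreover have "fps_deriv S * F ^ N = (\<Sum>n=0..N. fps_const (c n) * (fps_deriv (a ^ n) * F ^ N))"
    by (simp add: S_def fps_deriv_sum sum_distrib_right mult.assoc)
  then have "(fps_deriv S * F ^ N) $ (N - 1) = (\<Sum>n=0..N. if n = N then c n * of_nat N else 0)"
    using fps_deriv_power_X_div_times_power_nth[OF F0] k unfolding a_def
    by (simp add: fps_sum_nth if_distrib[of "(*) _"] cong: if_cong)
  ultimately show ?thesis by (simp add: c_def a_def mult.commute)
qed

text \<open>Both sides are the coefficient of \<open>X^(n+2)\<close> in \<open>T^2\<close>, for \<open>T\<close> the compositional inverse
  of \<open>X / F\<close>.\<close>

lemma fps_lagrange_inversion_square: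
  fixes F :: "'a::field_char_0 fps"
  assumes F0: "F $ 0 \<noteq> 0"
  shows "(\<Sum>j=0..n. (F ^ (j + 1)) $ j / of_nat (j + 1) * ((F ^ (n - j + 1)) $ (n - j) / of_nat (n - j + 1)))
         = 2 * (F ^ (n + 2)) $ n / of_nat (n + 2)"
proof -
  define T where "T = fps_inv (fps_X * inverse F)"
  have T0: "T $ 0 = 0" by (simp add: T_def fps_inv_def)
  have T_nth: "T $ N = (F ^ N) $ (N - 1) / of_nat N" if "N \<ge> 1" for N
    using fps_lagrange_inversion[OF F0, of 1 N] that unfolding T_def by (simp add: field_simps)
  have "(T ^ 2) $ (n + 2) = (\<Sum>i=0..n+2. T $ i * T $ (n + 2 - i))"
    by (simp add: power2_eq_square fps_mult_nth)
  also have "\<dots> = (\<Sum>i=1..n+1. T $ i * T $ (n + 2 - i))"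
    by (rule sum.mono_neutral_right) (use T0 in \<open>auto simp: le_Suc_eq Suc_le_eq\<close>)
  also have "\<dots> = (\<Sum>j=0..n. T $ (j + 1) * T $ (n - j + 1))"
    by (rule sum.reindex_bij_witness[of _ "\<lambda>j. j + 1" "\<lambda>i. i - 1"]) (auto simp: Suc_diff_le)
  also have "\<dots> = (\<Sum>j=0..n. (F ^ (j + 1)) $ j / of_nat (j + 1) * ((F ^ (n - j + 1)) $ (n - j) / of_nat (n - j + 1)))"
    by (intro sum.cong refl) (simp add: T_nth)
  finally have "(T ^ 2) $ (n + 2) = \<dots>" .
  moreover have "(of_nat (n + 2) :: 'a) \<noteq> 0" by (simp only: of_nat_eq_0_iff)
  ultimately show ?thesis
    using fps_lagrange_inversion[OF F0, of 2 "n + 2"] unfolding T_def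
    by (simp add: eq_divide_eq mult.commute del: of_nat_add)
qed

section \<open>The numbers of arc diagrams\<close>

lemma hockey_stick: "(\<Sum>p=0..m. (m - p + k - 1) choose (m - p)) = (m + k) choose m"
proof -
  have "(\<Sum>p=0..m. (m - p + k - 1) choose (m - p)) = (\<Sum>q=0..m. (q + k - 1) choose q)"
    by (rule sum.reindex_bij_witness[of _ "\<lambda>q. m - q" "\<lambda>p. m - p"]) auto
  also have "\<dots> = (m + k) choose m"
  proof (cases k)
    case 0
    then show ?thesis by (simp add: sum.atLeast_Suc_atMost)
  next
    case (Suc r)
    then show ?thesis using sum_choose_lower[of r m] by (simp add: atLeast0AtMost add.commute)
  qed
  finally show ?thesis .
qed

lemma power_add_divide_fact:
  fixes a b :: "'a::field_char_0"
  shows "(\<Sum>i=0..j. a ^ i / fact i * (b ^ (j - i) / fact (j - i))) = (a + b) ^ j / fact j"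
proof -
  have "(a + b) ^ j = (\<Sum>i=0..j. fact j * (a ^ i / fact i * (b ^ (j - i) / fact (j - i))))"
    unfolding binomial_ring atLeast0AtMost by (intro sum.cong) (auto simp: binomial_fact)
  also have "\<dots> = fact j * (\<Sum>i=0..j. a ^ i / fact i * (b ^ (j - i) / fact (j - i)))"
    by (simp only: sum_distrib_left)
  finally show ?thesis by (simp add: field_simps)
qed

text \<open>The coefficient of \<open>y^j\<close> in \<open>(1 - t e^y)^(-k) = \<Sum>m. binomial (m + k - 1) m * e^(m y) t^m\<close>.\<close>

definition weighted_binomial_series :: "nat \<Rightarrow> nat \<Rightarrow> rat fps" where
  "weighted_binomial_series k j = Abs_fps (\<lambda>m. of_nat m ^ j * of_nat ((m + k - 1) choose m) / fact j)"

lemma weighted_binomial_series_0: "weighted_binomial_series 0 j = (if j = 0 then 1 else 0)"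
  by (rule fps_ext) (auto simp: weighted_binomial_series_def)

lemma weighted_binomial_series_convolution:
  "(\<Sum>i=0..j. weighted_binomial_series 1 i * weighted_binomial_series k (j - i))
     = weighted_binomial_series (k + 1) j"
proof (rule fps_ext)
  fix m
  have "(\<Sum>i=0..j. weighted_binomial_series 1 i * weighted_binomial_series k (j - i)) $ m
      = (\<Sum>p=0..m. of_nat ((m - p + k - 1) choose (m - p)) *
           (\<Sum>i=0..j. of_nat p ^ i / fact i * (of_nat (m - p) ^ (j - i) / fact (j - i))))"
    by (simp add: fps_sum_nth fps_mult_nth weighted_binomial_series_def sum_distrib_left mult_ac
        sum.swap[of _ "{0..j}"])
  also have "\<dots> = (\<Sum>p=0..m. of_nat ((m - p + k - 1) choose (m - p)) * (of_nat m ^ j / fact j))"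
  proof (intro sum.cong refl)
    fix p assume "p \<in> {0..m}"
    then have "of_nat p + of_nat (m - p) = (of_nat m :: rat)" by (simp flip: of_nat_add)
    then show "of_nat ((m - p + k - 1) choose (m - p)) *
        (\<Sum>i=0..j. of_nat p ^ i / fact i * (of_nat (m - p) ^ (j - i) / fact (j - i)))
      = of_nat ((m - p + k - 1) choose (m - p)) * (of_nat m ^ j / (fact j :: rat))"
      by (subst power_add_divide_fact) simp
  qed
  also have "\<dots> = of_nat ((m + k) choose m) * (of_nat m ^ j / fact j)"
    by (simp only: hockey_stick flip: sum_distrib_right of_nat_sum)
  finally show "(\<Sum>i=0..j. weighted_binomial_series 1 i * weighted_binomial_series k (j - i)) $ m
      = weighted_binomial_series (k + 1) j $ m"
    by (simp add: weighted_binomial_series_def)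
qed

lemma fps_to_fls_sum: "fps_to_fls (sum f A) = (\<Sum>i\<in>A. fps_to_fls (f i))"
  by (induction A rule: infinite_finite_induct) auto

lemma fps_to_fls_divide_of_nat:
  "fps_to_fls A / (of_nat c :: rat fls) = fps_to_fls (fps_const (1 / of_nat c) * A)"
  by (simp add: divide_inverse fls_inverse_of_nat fls_times_fps_to_fls mult.commute)

text \<open>The series \<open>1 / (1 - t e^y)\<close> in \<open>y\<close>, with coefficients in the field of Laurent series in \<open>t\<close>
  so that Lagrange inversion applies.\<close>

definition exp_geometric :: "rat fls fps" where
  "exp_geometric = Abs_fps (\<lambda>j. fps_to_fls (weighted_binomial_series 1 j))"

lemma exp_geometric_power_nth: "(exp_geometric ^ k) $ j = fps_to_fls (weighted_binomial_series k j)"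
proof (induction k arbitrary: j)
  case 0
  then show ?case by (simp add: weighted_binomial_series_0)
next
  case (Suc k)
  have "(exp_geometric ^ Suc k) $ j = (\<Sum>i=0..j. exp_geometric $ i * (exp_geometric ^ k) $ (j - i))"
    by (simp add: fps_mult_nth)
  also have "\<dots> = (\<Sum>i=0..j. fps_to_fls (weighted_binomial_series 1 i * weighted_binomial_series k (j - i)))"
    by (simp only: Suc fls_times_fps_to_fls) (simp add: exp_geometric_def)
  also have "\<dots> = fps_to_fls (weighted_binomial_series (Suc k) j)"
    using weighted_binomial_series_convolution[where j=j and k=k] by (simp flip: fps_to_fls_sum)
  finally show ?case .
qed

lemma weighted_binomial_series_square_convolution:
  "(\<Sum>j=0..n. fps_const (1 / of_nat (j + 1)) * weighted_binomial_series (j + 1) j *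
      (fps_const (1 / of_nat (n - j + 1)) * weighted_binomial_series (n - j + 1) (n - j)))
    = 2 * (fps_const (1 / of_nat (n + 2)) * weighted_binomial_series (n + 2) n)"
proof -
  have "exp_geometric $ 0 \<noteq> 0"
    by (simp add: exp_geometric_def weighted_binomial_series_def fps_eq_iff exI[of _ 0])
  then have "(\<Sum>j=0..n. (exp_geometric ^ (j + 1)) $ j / of_nat (j + 1) *
      ((exp_geometric ^ (n - j + 1)) $ (n - j) / of_nat (n - j + 1)))
      = 2 * (exp_geometric ^ (n + 2)) $ n / of_nat (n + 2)"
    by (rule fps_lagrange_inversion_square)
  then have "fps_to_fls (\<Sum>j=0..n. fps_const (1 / of_nat (j + 1)) * weighted_binomial_series (j + 1) j *
      (fps_const (1 / of_nat (n - j + 1)) * weighted_binomial_series (n - j + 1) (n - j)))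
    = fps_to_fls (2 * (fps_const (1 / of_nat (n + 2)) * weighted_binomial_series (n + 2) n))"
    unfolding exp_geometric_power_nth times_divide_eq_right[symmetric] fps_to_fls_divide_of_nat
    by (simp only: fps_to_fls_sum fls_times_fps_to_fls) simp
  then show ?thesis by simp
qed

definition arc_count :: "nat \<Rightarrow> nat \<Rightarrow> rat" where
  "arc_count j m = of_nat m ^ j * of_nat ((m + j) choose m) / of_nat (j + 1)"

lemma arc_count_0_right: "arc_count j 0 = (if j = 0 then 1 else 0)"
  by (simp add: arc_count_def)

lemma arc_count_convolution:
  "(\<Sum>j=0..n. of_nat (n choose j) * (\<Sum>p=0..m. arc_count j p * arc_count (n - j) (m - p)))
     = 2 * of_nat m ^ n * of_nat ((m + n + 1) choose m) / of_nat (n + 2)"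
proof -
  define A where "A j = fps_const (1 / of_nat (j + 1)) * weighted_binomial_series (j + 1) j" for j
  have A_nth: "A j $ p = arc_count j p / fact j" for j p
    by (simp add: A_def weighted_binomial_series_def arc_count_def add.commute)
  have conv: "(\<Sum>j=0..n. A j * A (n - j)) = fps_const (2 / of_nat (n + 2)) * weighted_binomial_series (n + 2) n"
    using weighted_binomial_series_square_convolution[of n]
    by (simp add: A_def mult.assoc fps_numeral_fps_const fps_const_mult_apply_left)
  have "(\<Sum>j=0..n. \<Sum>p=0..m. A j $ p * A (n - j) $ (m - p)) = (\<Sum>j=0..n. A j * A (n - j)) $ m"
    by (simp add: fps_sum_nth fps_mult_nth)
  also have "\<dots> = 2 / of_nat (n + 2) * weighted_binomial_series (n + 2) n $ m"
    unfolding conv by (rule fps_mult_left_const_nth)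
  finally have conv_nth: "(\<Sum>j=0..n. \<Sum>p=0..m. A j $ p * A (n - j) $ (m - p)) = \<dots>" .
  have "(\<Sum>j=0..n. of_nat (n choose j) * (\<Sum>p=0..m. arc_count j p * arc_count (n - j) (m - p)))
      = fact n * (\<Sum>j=0..n. \<Sum>p=0..m. A j $ p * A (n - j) $ (m - p))"
    by (simp add: A_nth sum_distrib_left binomial_fact field_simps)
  also have "\<dots> = fact n * (2 / of_nat (n + 2) * weighted_binomial_series (n + 2) n $ m)"
    by (simp only: conv_nth)
  finally show ?thesis by (simp add: weighted_binomial_series_def)
qed

text \<open>Reflecting \<open>j \<mapsto> n - j\<close> and \<open>k \<mapsto> m - k\<close> shows that the weights \<open>m - k\<close> and \<open>k\<close> give the
  same sum, so the sum is half of \<open>m\<close> times the convolution above.\<close>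

lemma arc_count_Suc_convolution:
  "arc_count (Suc n) m
     = (\<Sum>k=0..m. of_nat (m - k) * (\<Sum>j=0..n. of_nat (n choose j) * (arc_count j k * arc_count (n - j) (m - k))))"
proof -
  define C where "C k = (\<Sum>j=0..n. of_nat (n choose j) * (arc_count j k * arc_count (n - j) (m - k)))" for k
  have C_reflect: "C (m - k) = C k" if "k \<le> m" for k
    unfolding C_def using that
    by (intro sum.reindex_bij_witness[of _ "\<lambda>j. n - j" "\<lambda>j. n - j"])
       (auto simp: binomial_symmetric[symmetric] mult_ac)
  define S where "S = (\<Sum>k=0..m. of_nat (m - k) * C k)"
  have "S = (\<Sum>k=0..m. of_nat k * C k)"
    unfolding S_def
    by (rule sum.reindex_bij_witness[of _ "\<lambda>k. m - k" "\<lambda>k. m - k"]) (auto simp: C_reflect)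
  then have "2 * S = (\<Sum>k=0..m. of_nat (m - k) * C k) + (\<Sum>k=0..m. of_nat k * C k)"
    by (simp add: S_def)
  also have "\<dots> = of_nat m * (\<Sum>k=0..m. C k)"
    by (simp add: sum_distrib_left flip: sum.distrib distrib_right of_nat_add)
  also have "(\<Sum>k=0..m. C k)
      = (\<Sum>j=0..n. of_nat (n choose j) * (\<Sum>k=0..m. arc_count j k * arc_count (n - j) (m - k)))"
    unfolding C_def by (simp add: sum_distrib_left sum.swap[of _ "{0..m}"])
  finally have "2 * S = of_nat m * (2 * of_nat m ^ n * of_nat ((m + n + 1) choose m) / of_nat (n + 2))"
    by (simp only: arc_count_convolution)
  then have "S = of_nat m ^ Suc n * of_nat ((m + Suc n) choose m) / of_nat (Suc n + 1)"
    by (simp add: field_simps)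
  then show ?thesis by (simp add: S_def C_def arc_count_def)
qed

lemma arc_count_Suc:
  "arc_count (Suc n) m = of_nat m * arc_count n m
     + (\<Sum>k\<in>{1..<m}. of_nat (m - k) * (\<Sum>j=0..n. of_nat (n choose j) * (arc_count j k * arc_count (n - j) (m - k))))"
proof (cases "m = 0")
  case True
  then show ?thesis by (simp add: arc_count_def)
next
  case False
  then have "{0..m} = insert 0 (insert m {1..<m})" by auto
  moreover have "(\<Sum>j=0..n. of_nat (n choose j) * (arc_count j 0 * arc_count (n - j) m))
      = (\<Sum>j=0..n. if j = 0 then arc_count n m else 0)"
    by (intro sum.cong refl) (simp add: arc_count_0_right)
  ultimately show ?thesis
    using False by (subst arc_count_Suc_convolution) simp
qed

section \<open>Noncrossing arc diagrams\<close>

text \<open>Endpoints are ordered by colour, ties broken by label: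
  this is the order of the letters of a quasi-Stirling permutation coloured weakly increasingly.\<close>

definition left_key :: "(nat \<Rightarrow> nat \<times> nat) \<Rightarrow> nat \<Rightarrow> nat \<times> nat" where
  "left_key \<phi> a = (fst (\<phi> a), a)"

definition right_key :: "(nat \<Rightarrow> nat \<times> nat) \<Rightarrow> nat \<Rightarrow> nat \<times> nat" where
  "right_key \<phi> a = (snd (\<phi> a), a)"

definition crosses :: "(nat \<Rightarrow> nat \<times> nat) \<Rightarrow> nat \<Rightarrow> nat \<Rightarrow> bool" where
  "crosses \<phi> a b \<longleftrightarrow>
     left_key \<phi> a < left_key \<phi> b \<and> left_key \<phi> b < right_key \<phi> a \<and> right_key \<phi> a < right_key \<phi> b"

definition noncrossing :: "nat set \<Rightarrow> (nat \<Rightarrow> nat \<times> nat) \<Rightarrow> bool" where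
  "noncrossing L \<phi> \<longleftrightarrow> (\<forall>a\<in>L. \<forall>b\<in>L. \<not> crosses \<phi> a b)"

definition arc_diagrams :: "nat set \<Rightarrow> nat \<Rightarrow> (nat \<Rightarrow> nat \<times> nat) set" where
  "arc_diagrams L m = {\<phi>. (\<forall>a. a \<notin> L \<longrightarrow> \<phi> a = (0, 0)) \<and>
     (\<forall>a\<in>L. fst (\<phi> a) \<le> snd (\<phi> a) \<and> snd (\<phi> a) < m) \<and> noncrossing L \<phi>}"

lemma finite_arc_diagrams:
  assumes "finite L"
  shows "finite (arc_diagrams L m)"
proof (rule finite_subset)
  show "arc_diagrams L m \<subseteq> {f. \<forall>x. (x \<in> L \<longrightarrow> f x \<in> {0..<m} \<times> {0..<m}) \<and> (x \<notin> L \<longrightarrow> f x = (0, 0))}"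
    by (auto simp: arc_diagrams_def mem_Times_iff)
  show "finite \<dots>" by (rule finite_set_of_finite_funs) (use assms in auto)
qed

lemma arc_diagrams_empty: "arc_diagrams {} m = {\<lambda>_. (0, 0)}"
  by (auto simp: arc_diagrams_def noncrossing_def)

lemma noncrossing_subset: "noncrossing L \<phi> \<Longrightarrow> L' \<subseteq> L \<Longrightarrow> noncrossing L' \<phi>"
  unfolding noncrossing_def by blast

lemma noncrossing_cong: "(\<And>b. b \<in> L \<Longrightarrow> \<phi> b = \<psi> b) \<Longrightarrow> noncrossing L \<phi> = noncrossing L \<psi>"
  unfolding noncrossing_def crosses_def left_key_def right_key_def by auto

lemma noncrossing_map_strict_mono:
  fixes h :: "nat \<Rightarrow> nat"
  assumes h: "strict_mono_on C h"
    and C: "\<And>b. b \<in> L \<Longrightarrow> fst (\<phi> b) \<in> C \<and> snd (\<phi> b) \<in> C"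
    and \<psi>: "\<And>b. b \<in> L \<Longrightarrow> \<psi> b = (h (fst (\<phi> b)), h (snd (\<phi> b)))"
  shows "noncrossing L \<psi> \<longleftrightarrow> noncrossing L \<phi>"
proof -
  have key_less: "(h x, a) < (h y, b) \<longleftrightarrow> (x, a) < (y, b)" if "x \<in> C" "y \<in> C" for x y a b :: nat
    using strict_mono_on_less[OF h that] strict_mono_on_less_eq[OF h that] by simp
  have "crosses \<psi> a b \<longleftrightarrow> crosses \<phi> a b" if "a \<in> L" "b \<in> L" for a b
    unfolding crosses_def left_key_def right_key_def \<psi>[OF that(1)] \<psi>[OF that(2)] fst_conv snd_conv
    using C[OF that(1)] C[OF that(2)] by (simp only: key_less)
  then show ?thesis unfolding noncrossing_def by auto
qed

lemma not_interleaved_inside_outside: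
  fixes P Q x1 x2 y1 y2 :: "'a::linorder"
  assumes "P < y1" "y2 < Q" "x1 < P \<or> Q < x1" "x2 < P \<or> Q < x2" "x1 \<le> x2"
  shows "\<not> (x1 < y1 \<and> y1 < x2 \<and> x2 < y2)" "\<not> (y1 < x1 \<and> x1 < y2 \<and> y2 < x2)"
  using assms by (meson order.strict_trans order.asym)+

lemma noncrossing_nest:
  assumes "noncrossing S \<phi>" "noncrossing R \<phi>" "left_key \<phi> a < right_key \<phi> a"
    and inner: "\<And>b. b \<in> S \<Longrightarrow> left_key \<phi> a < left_key \<phi> b \<and> right_key \<phi> b < right_key \<phi> a"
    and outer: "\<And>b. b \<in> R \<Longrightarrow> (left_key \<phi> b < left_key \<phi> a \<or> right_key \<phi> a < left_key \<phi> b) \<and>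
      (right_key \<phi> b < left_key \<phi> a \<or> right_key \<phi> a < right_key \<phi> b) \<and> left_key \<phi> b \<le> right_key \<phi> b"
  shows "noncrossing (insert a (S \<union> R)) \<phi>"
proof -
  have inner_outer: "\<not> crosses \<phi> x y \<and> \<not> crosses \<phi> y x" if "x \<in> S" "y \<in> R" for x y
    using not_interleaved_inside_outside[of "left_key \<phi> a" "left_key \<phi> x" "right_key \<phi> x" "right_key \<phi> a"
        "left_key \<phi> y" "right_key \<phi> y"] inner[OF that(1)] outer[OF that(2)]
    unfolding crosses_def by blast
  have with_a: "\<not> crosses \<phi> a y \<and> \<not> crosses \<phi> y a" if "y \<in> insert a (S \<union> R)" for y
    using that assms(3) inner[of y] outer[of y] unfolding crosses_def
    by (auto dest: order.strict_trans order.asym)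
  show ?thesis
    unfolding noncrossing_def
  proof (intro ballI)
    fix x y assume "x \<in> insert a (S \<union> R)" "y \<in> insert a (S \<union> R)"
    then consider "x = a" | "y = a" | "x \<in> S" "y \<in> S" | "x \<in> R" "y \<in> R" | "x \<in> S" "y \<in> R" | "x \<in> R" "y \<in> S"
      by blast
    then show "\<not> crosses \<phi> x y"
      by cases (use assms(1,2) inner_outer with_a \<open>x \<in> _\<close> \<open>y \<in> _\<close> in \<open>auto simp: noncrossing_def\<close>)
  qed
qed

lemma noncrossing_insert_loop:
  assumes "noncrossing L \<phi>" "\<phi> a = (c, c)"
  shows "noncrossing (insert a L) \<phi>"
  using assms unfolding noncrossing_def crosses_def left_key_def right_key_def
  by (auto dest: order.strict_trans order.asym)

lemma card_arc_diagrams_loop_fibre: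
  assumes a: "a \<in> L" and "c < m"
  shows "card {\<phi> \<in> arc_diagrams L m. \<phi> a = (c, c)} = card (arc_diagrams (L - {a}) m)"
proof (rule bij_betw_same_card[of "\<lambda>\<phi>. \<phi>(a := (0, 0))"], rule bij_betw_byWitness[where f'="\<lambda>\<psi>. \<psi>(a := (c, c))"])
  show "(\<lambda>\<phi>. \<phi>(a := (0, 0))) ` {\<phi> \<in> arc_diagrams L m. \<phi> a = (c, c)} \<subseteq> arc_diagrams (L - {a}) m"
  proof clarify
    fix \<phi> assume \<phi>: "\<phi> \<in> arc_diagrams L m" "\<phi> a = (c, c)"
    then have "noncrossing (L - {a}) \<phi>" unfolding arc_diagrams_def using noncrossing_subset by blast
    then have "noncrossing (L - {a}) (\<phi>(a := (0, 0)))" by (subst noncrossing_cong) auto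
    then show "\<phi>(a := (0, 0)) \<in> arc_diagrams (L - {a}) m" using \<phi> unfolding arc_diagrams_def by auto
  qed
  show "(\<lambda>\<psi>. \<psi>(a := (c, c))) ` arc_diagrams (L - {a}) m \<subseteq> {\<phi> \<in> arc_diagrams L m. \<phi> a = (c, c)}"
  proof (rule image_subsetI)
    fix \<psi> assume \<psi>: "\<psi> \<in> arc_diagrams (L - {a}) m"
    then have "noncrossing (L - {a}) (\<psi>(a := (c, c)))" by (subst noncrossing_cong) (auto simp: arc_diagrams_def)
    then have "noncrossing (insert a (L - {a})) (\<psi>(a := (c, c)))" by (rule noncrossing_insert_loop) simp
    then show "\<psi>(a := (c, c)) \<in> {\<phi> \<in> arc_diagrams L m. \<phi> a = (c, c)}"
      using \<psi> a \<open>c < m\<close> by (auto simp: arc_diagrams_def insert_absorb)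
  qed
qed (auto simp: arc_diagrams_def fun_eq_iff)

lemma noncrossing_start_inside_lower_arc:
  assumes "noncrossing L \<phi>" "a \<in> L" "b \<in> L" "a < b"
    and "fst (\<phi> a) \<le> fst (\<phi> b)" "fst (\<phi> b) < snd (\<phi> a)"
  shows "snd (\<phi> b) < snd (\<phi> a)"
  using assms unfolding noncrossing_def crosses_def left_key_def right_key_def
  by (force simp: not_less)

lemma noncrossing_start_before_lower_arc:
  assumes "noncrossing L \<phi>" "a \<in> L" "b \<in> L" "a < b" "fst (\<phi> b) < fst (\<phi> a)"
  shows "snd (\<phi> b) < fst (\<phi> a) \<or> snd (\<phi> a) \<le> snd (\<phi> b)"
  using assms unfolding noncrossing_def crosses_def left_key_def right_key_def
  by (force simp: not_less)

definition map_arcs :: "(nat \<Rightarrow> nat) \<Rightarrow> nat set \<Rightarrow> (nat \<Rightarrow> nat \<times> nat) \<Rightarrow> nat \<Rightarrow> nat \<times> nat" where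
  "map_arcs h L \<phi> b = (if b \<in> L then (h (fst (\<phi> b)), h (snd (\<phi> b))) else (0, 0))"

lemma noncrossing_map_arcs:
  assumes "strict_mono_on C h" "\<And>b. b \<in> L \<Longrightarrow> fst (\<phi> b) \<in> C \<and> snd (\<phi> b) \<in> C"
  shows "noncrossing L (map_arcs h L \<phi>) \<longleftrightarrow> noncrossing L \<phi>"
  using assms by (intro noncrossing_map_strict_mono) (auto simp: map_arcs_def)

lemma map_arcs_in_arc_diagrams:
  assumes h: "strict_mono_on C h" and "noncrossing L \<phi>"
    and \<phi>: "\<And>b. b \<in> L \<Longrightarrow> fst (\<phi> b) \<in> C \<and> snd (\<phi> b) \<in> C \<and> fst (\<phi> b) \<le> snd (\<phi> b) \<and> h (snd (\<phi> b)) < m"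
  shows "map_arcs h L \<phi> \<in> arc_diagrams L m"
  using assms noncrossing_map_arcs[OF h, of L \<phi>] strict_mono_on_leD[OF h]
  by (auto simp: arc_diagrams_def map_arcs_def)

definition open_gap :: "nat \<Rightarrow> nat \<Rightarrow> nat \<Rightarrow> nat" where
  "open_gap c k x = (if x < c then x else x + k)"

definition close_gap :: "nat \<Rightarrow> nat \<Rightarrow> nat \<Rightarrow> nat" where
  "close_gap c k x = (if x < c then x else x - k)"

lemma strict_mono_open_gap: "strict_mono (open_gap c k)"
  by (auto simp: strict_mono_def open_gap_def)

lemma strict_mono_on_close_gap: "strict_mono_on {x. x < c \<or> c + k \<le> x} (close_gap c k)"
  by (auto simp: strict_mono_on_def close_gap_def)

text \<open>The arc \<open>(c1, c2)\<close> of \<open>a\<close>, with \<open>\<psi>\<close> drawn inside it on the colours \<open>[c1, c2)\<close> and \<open>\<chi>\<close> drawn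
  on the remaining colours.\<close>

definition nest_arcs ::
  "nat \<Rightarrow> nat \<Rightarrow> nat \<Rightarrow> nat set \<Rightarrow> (nat \<Rightarrow> nat \<times> nat) \<Rightarrow> nat set \<Rightarrow> (nat \<Rightarrow> nat \<times> nat) \<Rightarrow> nat \<Rightarrow> nat \<times> nat"
where
  "nest_arcs a c1 c2 S \<psi> R \<chi> b =
     (if b = a then (c1, c2) else if b \<in> S then map_arcs (\<lambda>x. x + c1) S \<psi> b
      else map_arcs (open_gap c1 (c2 - c1)) R \<chi> b)"

lemma nest_arcs_in_arc_diagrams:
  assumes L: "a \<notin> S \<union> R" "S \<inter> R = {}" and gt: "\<And>b. b \<in> S \<union> R \<Longrightarrow> a < b"
    and c: "c1 < c2" "c2 < m"
    and \<psi>: "\<psi> \<in> arc_diagrams S (c2 - c1)" and \<chi>: "\<chi> \<in> arc_diagrams R (m - (c2 - c1))"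
  shows "nest_arcs a c1 c2 S \<psi> R \<chi> \<in> arc_diagrams (insert a (S \<union> R)) m"
proof -
  define k where "k = c2 - c1"
  define \<phi> where "\<phi> = nest_arcs a c1 c2 S \<psi> R \<chi>"
  have k: "c2 = c1 + k" using c by (simp add: k_def)
  have \<phi>a: "\<phi> a = (c1, c2)" by (simp add: \<phi>_def nest_arcs_def)
  have \<phi>S: "\<phi> b = (fst (\<psi> b) + c1, snd (\<psi> b) + c1)" and \<psi>b: "fst (\<psi> b) \<le> snd (\<psi> b)" "snd (\<psi> b) < k"
    if "b \<in> S" for b
    using that L \<psi> by (auto simp: \<phi>_def nest_arcs_def map_arcs_def arc_diagrams_def k_def)
  have \<phi>R: "\<phi> b = (open_gap c1 k (fst (\<chi> b)), open_gap c1 k (snd (\<chi> b)))"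
    and \<chi>b: "fst (\<chi> b) \<le> snd (\<chi> b)" "snd (\<chi> b) < m - k" if "b \<in> R" for b
    using that L \<chi> by (auto simp: \<phi>_def nest_arcs_def map_arcs_def arc_diagrams_def k_def)
  have gap: "open_gap c1 k x < c1 \<or> c2 \<le> open_gap c1 k x" "x \<le> y \<Longrightarrow> open_gap c1 k x \<le> open_gap c1 k y"
    "x < m - k \<Longrightarrow> open_gap c1 k x < m" for x y
    using k c by (auto simp: open_gap_def)
  have "noncrossing S \<phi>"
    using noncrossing_map_strict_mono[of UNIV "\<lambda>x. x + c1" S \<psi> \<phi>] \<phi>S \<psi>
    by (simp add: strict_mono_on_def arc_diagrams_def)
  moreover have "noncrossing R \<phi>"
    using noncrossing_map_strict_mono[OF strict_mono_open_gap, of R \<chi> \<phi>] \<phi>R \<chi>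
    by (simp add: arc_diagrams_def)
  moreover have "left_key \<phi> a < right_key \<phi> a" using \<phi>a c by (simp add: left_key_def right_key_def)
  moreover have "left_key \<phi> a < left_key \<phi> b \<and> right_key \<phi> b < right_key \<phi> a" if "b \<in> S" for b
    using \<phi>a \<phi>S[OF that] \<psi>b[OF that] gt[of b] that k by (simp add: left_key_def right_key_def)
  moreover have "(left_key \<phi> b < left_key \<phi> a \<or> right_key \<phi> a < left_key \<phi> b) \<and>
      (right_key \<phi> b < left_key \<phi> a \<or> right_key \<phi> a < right_key \<phi> b) \<and> left_key \<phi> b \<le> right_key \<phi> b"
    if "b \<in> R" for b
    using \<phi>a \<phi>R[OF that] \<chi>b[OF that] gap gt[of b] that by (auto simp: left_key_def right_key_def)
  ultimately have "noncrossing (insert a (S \<union> R)) \<phi>" by (rule noncrossing_nest)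
  moreover have "fst (\<phi> b) \<le> snd (\<phi> b) \<and> snd (\<phi> b) < m" if "b \<in> insert a (S \<union> R)" for b
    using that \<phi>a \<phi>S[of b] \<psi>b[of b] \<phi>R[of b] \<chi>b[of b] gap(2)[of "fst (\<chi> b)" "snd (\<chi> b)"] gap(3)[of "snd (\<chi> b)"] c k
    by auto
  moreover have "\<phi> b = (0, 0)" if "b \<notin> insert a (S \<union> R)" for b
    using that by (simp add: \<phi>_def nest_arcs_def map_arcs_def)
  ultimately show ?thesis by (simp add: arc_diagrams_def \<phi>_def)
qed

text \<open>If \<open>a\<close> is the smallest label, the arcs starting in \<open>[c1, c2)\<close> end there too, and no other
  arc has an endpoint in \<open>[c1, c2)\<close>.\<close>

lemma nest_arcs_split:
  assumes a: "a \<in> L" "\<forall>b\<in>L. a \<le> b" and \<phi>: "\<phi> \<in> arc_diagrams L m" "\<phi> a = (c1, c2)" "c1 < c2"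
  defines "S \<equiv> {b \<in> L - {a}. c1 \<le> fst (\<phi> b) \<and> fst (\<phi> b) < c2}" and "R \<equiv> {b \<in> L - {a}. fst (\<phi> b) < c1 \<or> c2 \<le> fst (\<phi> b)}"
  shows "map_arcs (\<lambda>x. x - c1) S \<phi> \<in> arc_diagrams S (c2 - c1)"
    and "map_arcs (close_gap c1 (c2 - c1)) R \<phi> \<in> arc_diagrams R (m - (c2 - c1))"
    and "nest_arcs a c1 c2 S (map_arcs (\<lambda>x. x - c1) S \<phi>) R (map_arcs (close_gap c1 (c2 - c1)) R \<phi>) = \<phi>"
proof -
  define k where "k = c2 - c1"
  have k: "c2 = c1 + k" using \<phi>(3) by (simp add: k_def)
  have gt: "a < b" if "b \<in> L - {a}" for b
    using that a le_neq_implies_less by blast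
  have nc: "noncrossing L \<phi>" and arc: "\<And>b. b \<in> L \<Longrightarrow> fst (\<phi> b) \<le> snd (\<phi> b) \<and> snd (\<phi> b) < m"
    and zero: "\<And>b. b \<notin> L \<Longrightarrow> \<phi> b = (0, 0)"
    using \<phi>(1) by (auto simp: arc_diagrams_def)
  have inner: "c1 \<le> fst (\<phi> b) \<and> fst (\<phi> b) \<le> snd (\<phi> b) \<and> snd (\<phi> b) < c2" if "b \<in> S" for b
    using that noncrossing_start_inside_lower_arc[OF nc a(1), of b] gt[of b] arc[of b] \<phi>(2)
    by (auto simp: S_def)
  have outer: "(fst (\<phi> b) < c1 \<or> c2 \<le> fst (\<phi> b)) \<and> (snd (\<phi> b) < c1 \<or> c2 \<le> snd (\<phi> b))
      \<and> fst (\<phi> b) \<le> snd (\<phi> b) \<and> snd (\<phi> b) < m" if "b \<in> R" for b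
    using that noncrossing_start_before_lower_arc[OF nc a(1), of b] gt[of b] arc[of b] \<phi>(2)
    by (auto simp: R_def)
  show "map_arcs (\<lambda>x. x - c1) S \<phi> \<in> arc_diagrams S (c2 - c1)"
  proof (rule map_arcs_in_arc_diagrams)
    show "strict_mono_on {c1..} (\<lambda>x. x - c1)" by (auto simp: strict_mono_on_def)
    show "noncrossing S \<phi>" using nc by (rule noncrossing_subset) (auto simp: S_def)
  qed (use inner k in fastforce)
  show "map_arcs (close_gap c1 (c2 - c1)) R \<phi> \<in> arc_diagrams R (m - (c2 - c1))"
  proof (rule map_arcs_in_arc_diagrams)
    show "strict_mono_on {x. x < c1 \<or> c1 + (c2 - c1) \<le> x} (close_gap c1 (c2 - c1))"
      by (rule strict_mono_on_close_gap)
    show "noncrossing R \<phi>" using nc by (rule noncrossing_subset) (auto simp: R_def)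
    show "fst (\<phi> b) \<in> {x. x < c1 \<or> c1 + (c2 - c1) \<le> x} \<and> snd (\<phi> b) \<in> {x. x < c1 \<or> c1 + (c2 - c1) \<le> x}
        \<and> fst (\<phi> b) \<le> snd (\<phi> b) \<and> close_gap c1 (c2 - c1) (snd (\<phi> b)) < m - (c2 - c1)" if "b \<in> R" for b
      using outer[OF that] \<phi>(2,3) arc[OF a(1)] by (auto simp: close_gap_def)
  qed
  show "nest_arcs a c1 c2 S (map_arcs (\<lambda>x. x - c1) S \<phi>) R (map_arcs (close_gap c1 (c2 - c1)) R \<phi>) = \<phi>"
  proof
    fix b
    consider "b = a" | "b \<in> S" | "b \<in> R" | "b \<notin> L" unfolding R_def S_def by force
    then show "nest_arcs a c1 c2 S (map_arcs (\<lambda>x. x - c1) S \<phi>) R (map_arcs (close_gap c1 (c2 - c1)) R \<phi>) b = \<phi> b"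
    proof cases
      case 2
      then show ?thesis using inner[OF 2] by (auto simp: nest_arcs_def map_arcs_def S_def prod_eq_iff)
    next
      case 3
      then show ?thesis using outer[OF 3] k
        by (auto simp: nest_arcs_def map_arcs_def close_gap_def open_gap_def R_def S_def prod_eq_iff)
    qed (use \<phi>(2) zero in \<open>auto simp: nest_arcs_def map_arcs_def R_def S_def\<close>)
  qed
qed

lemma card_arc_diagrams_arc_fibre:
  assumes a: "a \<in> L" "\<forall>b\<in>L. a \<le> b" and c: "c1 < c2" "c2 < m" and S: "S \<subseteq> L - {a}"
  shows "card {\<phi> \<in> arc_diagrams L m. \<phi> a = (c1, c2) \<and> {b \<in> L - {a}. c1 \<le> fst (\<phi> b) \<and> fst (\<phi> b) < c2} = S}
         = card (arc_diagrams S (c2 - c1)) * card (arc_diagrams (L - {a} - S) (m - (c2 - c1)))"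
proof -
  define k where "k = c2 - c1"
  define R where "R = L - {a} - S"
  define A where "A = {\<phi> \<in> arc_diagrams L m. \<phi> a = (c1, c2) \<and> {b \<in> L - {a}. c1 \<le> fst (\<phi> b) \<and> fst (\<phi> b) < c2} = S}"
  define decompose where "decompose \<phi> = (map_arcs (\<lambda>x. x - c1) S \<phi>, map_arcs (close_gap c1 k) R \<phi>)" for \<phi>
  define compose where "compose p = nest_arcs a c1 c2 S (fst p) R (snd p)" for p
  have k: "c2 = c1 + k" using c by (simp add: k_def)
  have L: "L = insert a (S \<union> R)" "a \<notin> S \<union> R" "S \<inter> R = {}" using S a by (auto simp: R_def)
  have gt: "a < b" if "b \<in> S \<union> R" for b
    using that L a le_neq_implies_less by blast
  have decompose_A: "S = {b \<in> L - {a}. c1 \<le> fst (\<phi> b) \<and> fst (\<phi> b) < c2}"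
    "R = {b \<in> L - {a}. fst (\<phi> b) < c1 \<or> c2 \<le> fst (\<phi> b)}" if "\<phi> \<in> A" for \<phi>
    using that by (auto simp: A_def R_def)
  have "bij_betw decompose A (arc_diagrams S k \<times> arc_diagrams R (m - k))"
  proof (rule bij_betw_byWitness[where f'=compose])
    show "\<forall>\<phi>\<in>A. compose (decompose \<phi>) = \<phi>"
      using nest_arcs_split(3)[OF a, of _ m c1 c2] c decompose_A
      by (auto simp: compose_def decompose_def A_def k_def)
    show "\<forall>p\<in>arc_diagrams S k \<times> arc_diagrams R (m - k). decompose (compose p) = p"
      using L k
      by (auto simp: fun_eq_iff compose_def decompose_def nest_arcs_def map_arcs_def close_gap_def open_gap_def arc_diagrams_def)
    show "decompose ` A \<subseteq> arc_diagrams S k \<times> arc_diagrams R (m - k)"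
      using nest_arcs_split(1,2)[OF a, of _ m c1 c2] c decompose_A
      by (auto simp: decompose_def A_def k_def)
    show "compose ` (arc_diagrams S k \<times> arc_diagrams R (m - k)) \<subseteq> A"
    proof clarsimp
      fix \<psi> \<chi> assume \<psi>: "\<psi> \<in> arc_diagrams S k" and \<chi>: "\<chi> \<in> arc_diagrams R (m - k)"
      have "compose (\<psi>, \<chi>) \<in> arc_diagrams L m"
        using nest_arcs_in_arc_diagrams[of a S R c1 c2 m \<psi> \<chi>] L gt c \<psi> \<chi> by (simp add: compose_def k_def)
      moreover have "{b \<in> L - {a}. c1 \<le> fst (compose (\<psi>, \<chi>) b) \<and> fst (compose (\<psi>, \<chi>) b) < c2} = S"
        using L \<psi> k by (auto simp: compose_def nest_arcs_def map_arcs_def open_gap_def arc_diagrams_def)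
      ultimately show "compose (\<psi>, \<chi>) \<in> A" by (simp add: A_def compose_def nest_arcs_def)
    qed
  qed
  then show ?thesis by (simp add: bij_betw_same_card card_cartesian_product A_def k_def R_def)
qed

lemma card_eq_sum_card_fibres:
  assumes "finite A" "finite V" "f ` A \<subseteq> V"
  shows "card A = (\<Sum>v\<in>V. card {x \<in> A. f x = v})"
  using sum.group[OF assms, of "\<lambda>_. 1::nat"] by simp

lemma card_arc_diagrams_arc:
  assumes "finite L" "a \<in> L" "\<forall>b\<in>L. a \<le> b" "c1 < c2" "c2 < m"
  shows "card {\<phi> \<in> arc_diagrams L m. \<phi> a = (c1, c2)}
    = (\<Sum>S\<in>Pow (L - {a}). card (arc_diagrams S (c2 - c1)) * card (arc_diagrams (L - {a} - S) (m - (c2 - c1))))"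
proof -
  have "card {\<phi> \<in> arc_diagrams L m. \<phi> a = (c1, c2)}
      = (\<Sum>S\<in>Pow (L - {a}). card {\<phi> \<in> arc_diagrams L m. \<phi> a = (c1, c2)
           \<and> {b \<in> L - {a}. c1 \<le> fst (\<phi> b) \<and> fst (\<phi> b) < c2} = S})"
    by (subst card_eq_sum_card_fibres[where f = "\<lambda>\<phi>. {b \<in> L - {a}. c1 \<le> fst (\<phi> b) \<and> fst (\<phi> b) < c2}"
          and V = "Pow (L - {a})"]) (auto simp: assms finite_arc_diagrams intro!: sum.cong)
  also have "\<dots> = (\<Sum>S\<in>Pow (L - {a}). card (arc_diagrams S (c2 - c1)) * card (arc_diagrams (L - {a} - S) (m - (c2 - c1))))"
    using assms by (intro sum.cong refl card_arc_diagrams_arc_fibre) auto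
  finally show ?thesis .
qed

lemma card_arc_diagrams_min_label:
  assumes L: "finite L" and a: "a \<in> L" "\<forall>b\<in>L. a \<le> b"
  shows "card (arc_diagrams L m) = m * card (arc_diagrams (L - {a}) m)
    + (\<Sum>k\<in>{1..<m}. (m - k) * (\<Sum>S\<in>Pow (L - {a}). card (arc_diagrams S k) * card (arc_diagrams (L - {a} - S) (m - k))))"
proof -
  define F where "F v = card {\<phi> \<in> arc_diagrams L m. \<phi> a = v}" for v
  define diagonal where "diagonal = (\<lambda>c. (c, c)) ` {..<m}"
  define off_diagonal where "off_diagonal = (\<lambda>(k, c). (c, c + k)) ` (SIGMA k:{1..<m}. {..<m - k})"
  have image: "(\<lambda>\<phi>. \<phi> a) ` arc_diagrams L m \<subseteq> diagonal \<union> off_diagonal"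
  proof (rule image_subsetI)
    fix \<phi> assume "\<phi> \<in> arc_diagrams L m"
    then obtain c1 c2 where \<phi>a: "\<phi> a = (c1, c2)" "c1 \<le> c2" "c2 < m"
      using a by (force simp: arc_diagrams_def)
    show "\<phi> a \<in> diagonal \<union> off_diagonal"
    proof (cases "c1 = c2")
      case True
      then show ?thesis using \<phi>a by (simp add: diagonal_def)
    next
      case False
      then have "(c2 - c1, c1) \<in> (SIGMA k:{1..<m}. {..<m - k})" "\<phi> a = (\<lambda>(k, c). (c, c + k)) (c2 - c1, c1)"
        using \<phi>a by auto
      then show ?thesis unfolding off_diagonal_def by blast
    qed
  qed
  have "card (arc_diagrams L m) = (\<Sum>v\<in>diagonal \<union> off_diagonal. F v)"
    unfolding F_def
    by (rule card_eq_sum_card_fibres[OF finite_arc_diagrams[OF L] _ image]) (simp add: diagonal_def off_diagonal_def)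
  also have "\<dots> = (\<Sum>v\<in>diagonal. F v) + (\<Sum>v\<in>off_diagonal. F v)"
    by (rule sum.union_disjoint) (auto simp: diagonal_def off_diagonal_def)
  also have "(\<Sum>v\<in>diagonal. F v) = m * card (arc_diagrams (L - {a}) m)"
    unfolding diagonal_def by (subst sum.reindex) (auto simp: inj_on_def F_def card_arc_diagrams_loop_fibre a)
  also have "(\<Sum>v\<in>off_diagonal. F v) = (\<Sum>k\<in>{1..<m}. \<Sum>c\<in>{..<m - k}. F (c, c + k))"
    unfolding off_diagonal_def by (subst sum.reindex) (auto simp: inj_on_def sum.Sigma split_beta)
  also have "\<dots> = (\<Sum>k\<in>{1..<m}. (m - k) *
      (\<Sum>S\<in>Pow (L - {a}). card (arc_diagrams S k) * card (arc_diagrams (L - {a} - S) (m - k))))"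
    unfolding F_def by (intro sum.cong refl) (simp add: card_arc_diagrams_arc L a)
  finally show ?thesis .
qed

lemma sum_Pow_card:
  fixes h :: "nat \<Rightarrow> 'a::comm_semiring_1"
  assumes "finite A"
  shows "(\<Sum>S\<in>Pow A. h (card S)) = (\<Sum>j=0..card A. of_nat (card A choose j) * h j)"
proof -
  have "(\<Sum>S\<in>Pow A. h (card S)) = (\<Sum>j=0..card A. \<Sum>S\<in>{S \<in> Pow A. card S = j}. h (card S))"
    by (rule sum.group[symmetric]) (use assms in \<open>auto intro: card_mono\<close>)
  also have "\<dots> = (\<Sum>j=0..card A. of_nat (card A choose j) * h j)"
    using assms by (intro sum.cong refl) (simp add: Pow_def n_subsets)
  finally show ?thesis .
qed

theorem card_arc_diagrams: "finite L \<Longrightarrow> of_nat (card (arc_diagrams L m)) = arc_count (card L) m"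
proof (induction "card L" arbitrary: L m rule: less_induct)
  case less
  show ?case
  proof (cases "L = {}")
    case True
    then show ?thesis by (simp add: arc_diagrams_empty arc_count_def)
  next
    case False
    define a where "a = Min L"
    define L' where "L' = L - {a}"
    have a: "a \<in> L" "\<forall>b\<in>L. a \<le> b" using False less.prems by (auto simp: a_def)
    have fin: "finite L'" and card_L: "card L = Suc (card L')"
      using less.prems a by (auto simp: L'_def card_Suc_Diff1 simp del: card_Diff_insert)
    have IH: "of_nat (card (arc_diagrams T k)) = arc_count (card T) k" if "T \<subseteq> L'" for T k
      using less.hyps[of T] card_mono[OF fin that] finite_subset[OF that fin] card_L by simp
    have product: "of_nat (card (arc_diagrams S k)) * of_nat (card (arc_diagrams (L' - S) (m - k)))
        = arc_count (card S) k * arc_count (card L' - card S) (m - k)" if "S \<in> Pow L'" for S k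
      using that IH[of S] IH[of "L' - S"] card_Diff_subset[OF finite_subset[OF _ fin]] by auto
    have "of_nat (card (arc_diagrams L m)) = of_nat m * arc_count (card L') m
      + (\<Sum>k\<in>{1..<m}. of_nat (m - k) * (\<Sum>S\<in>Pow L'. arc_count (card S) k * arc_count (card L' - card S) (m - k)))"
      unfolding card_arc_diagrams_min_label[OF less.prems a, of m, folded L'_def]
      by (simp only: of_nat_add of_nat_mult of_nat_sum IH[OF order_refl] product cong: sum.cong)
    also have "\<dots> = arc_count (card L) m"
      by (simp add: card_L arc_count_Suc sum_Pow_card[OF fin, of "\<lambda>j. arc_count j _ * arc_count (card L' - j) _"])
    finally show ?thesis .
  qed
qed

section \<open>Colourings compatible with descents\<close>

lemma des_Nil: "des [] = 0"
  by (simp add: des_def)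

lemma des_singleton: "des [x] = 1"
proof -
  have "{i. i < length [x] \<and> (i = length [x] - 1 \<or> [x] ! i > [x] ! (i + 1))} = {0}" by auto
  then show ?thesis by (simp add: des_def)
qed

lemma des_Cons_Cons: "des (x # y # r) = (if y < x then 1 else 0) + des (y # r)"
proof -
  define D where "D w = {i. i < length w \<and> (i = length w - 1 \<or> w ! i > w ! (i + 1))}" for w :: "nat list"
  have "D (x # y # r) = (if y < x then {0} else {}) \<union> Suc ` D (y # r)"
  proof (rule set_eqI)
    fix i show "i \<in> D (x # y # r) \<longleftrightarrow> i \<in> (if y < x then {0} else {}) \<union> Suc ` D (y # r)"
      by (cases i) (auto simp: D_def)
  qed
  moreover have "finite (D (y # r))" by (simp add: D_def)
  ultimately have "card (D (x # y # r)) = (if y < x then 1 else 0) + card (D (y # r))"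
    by (auto simp: card_image)
  then show ?thesis by (simp add: des_def D_def)
qed

lemma des_pos: "w \<noteq> [] \<Longrightarrow> 1 \<le> des w"
  by (induction w rule: induct_list012) (auto simp: des_singleton des_Cons_Cons)

text \<open>Weakly increasing colourings of the letters of \<open>w\<close> with \<open>m\<close> colours that increase strictly at
  each descent of \<open>w\<close>: the lexicographic order on \<open>zip f w\<close> compares letters only where colours tie.\<close>

definition colourings :: "nat list \<Rightarrow> nat \<Rightarrow> nat list set" where
  "colourings w m = {f. length f = length w \<and> sorted (zip f w) \<and> (\<forall>x\<in>set f. x < m)}"

lemma finite_colourings: "finite (colourings w m)"
  by (rule finite_subset[of _ "{f. set f \<subseteq> {..<m} \<and> length f = length w}"])
     (auto simp: colourings_def intro: finite_lists_length_eq)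

lemma sorted_zip_fst:
  assumes "length f = length w" "sorted (zip f w)"
  shows "sorted f"
proof -
  have "mono_on (set (zip f w)) fst" by (auto simp: mono_on_def less_eq_prod_def)
  then have "sorted (map fst (zip f w))" by (rule sorted_map_mono[OF assms(2)])
  then show ?thesis using assms(1) by simp
qed

lemma sorted_zip_map_strict_mono:
  assumes "sorted (zip f w)" "strict_mono_on (set f) h"
  shows "sorted (zip (map h f) w)"
proof -
  have "mono_on (set (zip f w)) (\<lambda>(a, b). (h a, b))"
    using assms(2) by (auto simp: mono_on_def strict_mono_on_less strict_mono_on_leD dest!: set_zip_leftD)
  then have "sorted (map (\<lambda>(a, b). (h a, b)) (zip f w))" by (rule sorted_map_mono[OF assms(1)])
  then show ?thesis by (simp add: zip_map1)
qed

lemma colourings_hd_ge: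
  assumes "w \<noteq> []"
  shows "{g \<in> colourings w m. s \<le> hd g} = map (\<lambda>z. z + s) ` colourings w (m - s)"
proof (intro set_eqI iffI)
  fix g assume g: "g \<in> {g \<in> colourings w m. s \<le> hd g}"
  then have len: "length g = length w" and srt: "sorted (zip g w)" and lt: "\<forall>x\<in>set g. x < m"
    by (auto simp: colourings_def)
  have "g \<noteq> []" using len assms by auto
  then have ge: "\<forall>z\<in>set g. s \<le> z"
    using g sorted_zip_fst[OF len srt] by (cases g) auto
  have "strict_mono_on (set g) (\<lambda>z. z - s)" using ge by (auto simp: strict_mono_on_def)
  moreover have "\<forall>z\<in>set g. z - s < m - s" using lt ge diff_less_mono by blast
  ultimately have "map (\<lambda>z. z - s) g \<in> colourings w (m - s)"
    using len sorted_zip_map_strict_mono[OF srt] by (auto simp: colourings_def)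
  moreover have "g = map (\<lambda>z. z + s) (map (\<lambda>z. z - s) g)" using ge by (simp add: map_idI)
  ultimately show "g \<in> map (\<lambda>z. z + s) ` colourings w (m - s)" by blast
next
  fix g assume "g \<in> map (\<lambda>z. z + s) ` colourings w (m - s)"
  then obtain g0 where g: "g = map (\<lambda>z. z + s) g0" and g0: "g0 \<in> colourings w (m - s)" by blast
  then have "g0 \<noteq> []" using assms by (auto simp: colourings_def)
  moreover have "strict_mono_on (set g0) (\<lambda>z. z + s)" by (auto simp: strict_mono_on_def)
  ultimately show "g \<in> {g \<in> colourings w m. s \<le> hd g}"
    using g0 sorted_zip_map_strict_mono[of g0 w] by (auto simp: g colourings_def hd_map)
qed

lemma card_colourings_hd_ge:
  "w \<noteq> [] \<Longrightarrow> card {g \<in> colourings w m. s \<le> hd g} = card (colourings w (m - s))"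
  by (simp add: colourings_hd_ge card_image inj_on_def)

lemma colourings_Cons_Cons:
  "colourings (x # y # r) m
     = (\<Union>v<m. Cons v ` {g \<in> colourings (y # r) m. v + (if y < x then 1 else 0) \<le> hd g})"
proof (intro set_eqI iffI)
  fix f assume f: "f \<in> colourings (x # y # r) m"
  then obtain v u g where fe: "f = v # u # g" by (auto simp: colourings_def length_Suc_conv)
  then have "(v, x) \<le> (u, y)" "u < m" "u # g \<in> colourings (y # r) m" using f by (auto simp: colourings_def)
  then have "v < m" "f \<in> Cons v ` {g \<in> colourings (y # r) m. v + (if y < x then 1 else 0) \<le> hd g}"
    using fe by auto
  then show "f \<in> (\<Union>v<m. Cons v ` {g \<in> colourings (y # r) m. v + (if y < x then 1 else 0) \<le> hd g})"
    by blast
next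
  fix f assume "f \<in> (\<Union>v<m. Cons v ` {g \<in> colourings (y # r) m. v + (if y < x then 1 else 0) \<le> hd g})"
  then obtain v u g where v: "v < m" and fe: "f = v # u # g" and g: "u # g \<in> colourings (y # r) m"
      and le: "v + (if y < x then 1 else 0) \<le> u"
    by (auto simp: colourings_def length_Suc_conv)
  have "(v, x) \<le> (u, y)" using le by (auto split: if_splits)
  then have "sorted (zip f (x # y # r))" using g by (simp only: fe zip_Cons_Cons sorted2 colourings_def) simp
  then show "f \<in> colourings (x # y # r) m" using g v fe by (auto simp: colourings_def)
qed

lemma card_colourings_Cons_Cons:
  "card (colourings (x # y # r) m) = (\<Sum>v<m. card (colourings (y # r) (m - (v + (if y < x then 1 else 0)))))"
proof -
  define B where "B v = {g \<in> colourings (y # r) m. v + (if y < x then 1 else 0) \<le> hd g}" for v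
  have "card (colourings (x # y # r) m) = (\<Sum>v<m. card (Cons v ` B v))"
    unfolding colourings_Cons_Cons B_def[symmetric]
    by (rule card_UN_disjoint) (auto simp: B_def finite_colourings)
  also have "\<dots> = (\<Sum>v<m. card (colourings (y # r) (m - (v + (if y < x then 1 else 0)))))"
    by (simp add: card_image B_def card_colourings_hd_ge)
  finally show ?thesis .
qed

lemma sum_choose_truncated:
  assumes "1 \<le> d"
  shows "(\<Sum>v<m. if d \<le> m - (v + e) then (m - (v + e) - d + N) choose N else 0)
       = (if e + d \<le> m then (m - (e + d) + Suc N) choose (Suc N) else 0)"
proof (cases "e + d \<le> m")
  case False
  then show ?thesis using assms by (auto intro!: sum.neutral)
next
  case True
  define T where "T = m - (e + d)"
  have "(\<Sum>v<m. if d \<le> m - (v + e) then (m - (v + e) - d + N) choose N else 0)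
      = (\<Sum>v=0..T. (T - v + Suc N - 1) choose (T - v))"
  proof (rule sum.mono_neutral_cong_right)
    show "\<forall>v\<in>{..<m} - {0..T}. (if d \<le> m - (v + e) then (m - (v + e) - d + N) choose N else 0) = 0"
      using True assms by (auto simp: T_def)
    show "(if d \<le> m - (v + e) then (m - (v + e) - d + N) choose N else 0) = (T - v + Suc N - 1) choose (T - v)"
      if "v \<in> {0..T}" for v
    proof -
      have "d \<le> m - (v + e)" "m - (v + e) - d = T - v" using that True by (auto simp: T_def)
      then show ?thesis using binomial_symmetric[of N "T - v + N"] by (simp add: add.commute)
    qed
  qed (use True assms in \<open>auto simp: T_def\<close>)
  also have "\<dots> = (T + Suc N) choose T" by (rule hockey_stick)
  also have "\<dots> = (T + Suc N) choose (Suc N)" by (metis add_diff_cancel_left' binomial_symmetric le_add1)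
  finally show ?thesis using True by (simp add: T_def)
qed

lemma card_colourings:
  "card (colourings w m) = (if des w \<le> m then (m - des w + length w) choose (length w) else 0)"
proof (induction w arbitrary: m rule: induct_list012)
  case 1
  have "colourings [] m = {[]}" by (auto simp: colourings_def)
  then show ?case by (simp add: des_Nil)
next
  case (2 x)
  have "colourings [x] m = (\<lambda>v. [v]) ` {..<m}"
    by (auto simp: colourings_def length_Suc_conv)
  then show ?case by (simp add: des_singleton card_image inj_on_def)
next
  case (3 x y r)
  have "card (colourings (x # y # r) m) = (\<Sum>v<m. if des (y # r) \<le> m - (v + (if y < x then 1 else 0))
      then (m - (v + (if y < x then 1 else 0)) - des (y # r) + length (y # r)) choose length (y # r) else 0)"
    by (simp only: card_colourings_Cons_Cons 3)
  also have "\<dots> = (if (if y < x then 1 else 0) + des (y # r) \<le> m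
      then (m - ((if y < x then 1 else 0) + des (y # r)) + Suc (length (y # r))) choose Suc (length (y # r)) else 0)"
    using des_pos[of "y # r"] by (intro sum_choose_truncated) auto
  finally show ?case by (simp add: des_Cons_Cons)
qed

section \<open>Coloured quasi-Stirling permutations\<close>

lemma mset_quasi_stirling: "w \<in> quasi_stirling n \<Longrightarrow> mset w = mset [1..<n+1] + mset [1..<n+1]"
  by (simp add: quasi_stirling_def)

lemma length_quasi_stirling: "w \<in> quasi_stirling n \<Longrightarrow> length w = 2 * n"
  using mset_quasi_stirling[THEN arg_cong[where f = size]] by simp

lemma finite_quasi_stirling: "finite (quasi_stirling n)"
proof (rule finite_subset)
  show "quasi_stirling n \<subseteq> {w. set w \<subseteq> {1..<n+1} \<and> length w = 2 * n}"
    using mset_quasi_stirling[THEN arg_cong[where f = set_mset]] length_quasi_stirling by fastforce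
  show "finite {w. set w \<subseteq> {1..<n+1} \<and> length w = 2 * n}" by (rule finite_lists_length_eq) simp
qed

text \<open>A quasi-Stirling permutation \<open>w\<close> with a colouring \<open>f \<in> colourings w m\<close> is the same as the
  sorted list \<open>zip f w\<close> of (colour, letter) pairs.\<close>

definition coloured_quasi_stirling :: "nat \<Rightarrow> nat \<Rightarrow> (nat \<times> nat) list set" where
  "coloured_quasi_stirling n m = {p. sorted p \<and> map snd p \<in> quasi_stirling n \<and> (\<forall>x\<in>set p. fst x < m)}"

lemma sum_card_colourings:
  "(\<Sum>w\<in>quasi_stirling n. card (colourings w m)) = card (coloured_quasi_stirling n m)"
proof -
  have "(\<Sum>w\<in>quasi_stirling n. card (colourings w m)) = card (SIGMA w:quasi_stirling n. colourings w m)"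
    by (simp add: finite_quasi_stirling finite_colourings)
  also have "\<dots> = card (coloured_quasi_stirling n m)"
  proof (rule bij_betw_same_card, rule bij_betw_byWitness[where f'="\<lambda>p. (map snd p, map fst p)"])
    show "(\<lambda>(w, f). zip f w) ` (SIGMA w:quasi_stirling n. colourings w m) \<subseteq> coloured_quasi_stirling n m"
      by (auto simp: coloured_quasi_stirling_def colourings_def dest: set_zip_leftD)
    show "(\<lambda>p. (map snd p, map fst p)) ` coloured_quasi_stirling n m \<subseteq> (SIGMA w:quasi_stirling n. colourings w m)"
      by (auto simp: coloured_quasi_stirling_def colourings_def zip_map_fst_snd)
  qed (auto simp: colourings_def zip_map_fst_snd)
  finally show ?thesis .
qed

definition arc_mset :: "nat set \<Rightarrow> (nat \<Rightarrow> nat \<times> nat) \<Rightarrow> (nat \<times> nat) multiset" where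
  "arc_mset L \<phi> = (\<Sum>a\<in>L. {#left_key \<phi> a, right_key \<phi> a#})"

definition arcs_of :: "nat set \<Rightarrow> (nat \<times> nat) list \<Rightarrow> nat \<Rightarrow> nat \<times> nat" where
  "arcs_of L p a = (if a \<in> L then (Min {c. (c, a) \<in> set p}, Max {c. (c, a) \<in> set p}) else (0, 0))"

lemma filter_arc_mset:
  "finite L \<Longrightarrow> filter_mset (\<lambda>x. snd x = a) (arc_mset L \<phi>)
     = (if a \<in> L then {#left_key \<phi> a, right_key \<phi> a#} else {#})"
proof (induction L rule: finite_induct)
  case (insert b L)
  then have "arc_mset (insert b L) \<phi> = {#left_key \<phi> b, right_key \<phi> b#} + arc_mset L \<phi>"
    by (simp add: arc_mset_def)
  with insert show ?case by (cases "a = b") (auto simp: left_key_def right_key_def)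
qed (simp add: arc_mset_def)

lemma count_image_mset_eq_size_filter: "count (image_mset f N) a = size (filter_mset (\<lambda>x. f x = a) N)"
  by (induction N) auto

lemma size_filter_letter_coloured_quasi_stirling:
  assumes "p \<in> coloured_quasi_stirling n m"
  shows "size (filter_mset (\<lambda>x. snd x = a) (mset p)) = (if a \<in> {1..n} then 2 else 0)"
  using assms mset_quasi_stirling[of "map snd p" n]
  by (auto simp: coloured_quasi_stirling_def simp flip: count_image_mset_eq_size_filter)

lemma filter_letter_coloured_quasi_stirling:
  assumes p: "p \<in> coloured_quasi_stirling n m"
  shows "filter_mset (\<lambda>x. snd x = a) (mset p) = (if a \<in> {1..n}
    then {#left_key (arcs_of {1..n} p) a, right_key (arcs_of {1..n} p) a#} else {#})"
proof (cases "a \<in> {1..n}")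
  case False
  then show ?thesis using size_filter_letter_coloured_quasi_stirling[OF p, of a]
    by (metis size_eq_0_iff_empty)
next
  case True
  define N where "N = filter_mset (\<lambda>x. snd x = a) (mset p)"
  have "size N = Suc 1" using size_filter_letter_coloured_quasi_stirling[OF p, of a] True by (simp add: N_def)
  then obtain u N' where "N = add_mset u N'" "size N' = 1" by (metis size_eq_Suc_imp_eq_union size_add_mset nat.inject)
  then obtain v where uv: "N = {#u, v#}" by (metis size_1_singleton_mset)
  have "u \<in># N" "v \<in># N" by (simp_all add: uv)
  then have "snd u = a" "snd v = a" by (simp_all add: N_def)
  moreover have "(c, a) \<in> set p \<longleftrightarrow> (c, a) \<in># N" for c
    by (simp add: N_def)
  then have "{c. (c, a) \<in> set p} = {fst u, fst v}"
    unfolding uv using \<open>snd u = a\<close> \<open>snd v = a\<close> by (cases u; cases v) auto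
  ultimately show ?thesis
    using True uv unfolding N_def by (cases u; cases v) (auto simp: arcs_of_def left_key_def right_key_def min_def max_def add_mset_commute)
qed

lemma card_le_length_filter: "I \<subseteq> {i. i < length xs \<and> P (xs ! i)} \<Longrightarrow> card I \<le> length (filter P xs)"
  by (simp add: length_filter_conv_card card_mono)

lemma sorted_nth_less_imp_less:
  assumes "sorted p" "i < length p" "p ! i < p ! j"
  shows "i < j"
proof (rule ccontr)
  assume "\<not> i < j"
  then have "p ! j \<le> p ! i" using assms(1,2) by (simp add: sorted_nth_mono)
  then show False using assms(3) by simp
qed

text \<open>Sortedness alone allows \<open>p ! i = p ! k = u\<close>; the multiplicity of \<open>u\<close> excludes it.\<close>

lemma sorted_nth_letter_pair:
  fixes p :: "('c::linorder \<times> 'a::linorder) list"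
  assumes p: "sorted p" "filter_mset (\<lambda>x. snd x = a) (mset p) = {#u, v#}" "u \<le> v"
    and ik: "i < k" "k < length p" "snd (p ! i) = a" "snd (p ! k) = a"
  shows "p ! i = u \<and> p ! k = v"
proof -
  have "p ! i \<in># filter_mset (\<lambda>x. snd x = a) (mset p)" "p ! k \<in># filter_mset (\<lambda>x. snd x = a) (mset p)"
    using ik by simp_all
  then have uv: "p ! i \<in> {u, v}" "p ! k \<in> {u, v}" unfolding p(2) by auto
  have le: "p ! i \<le> p ! k" using p(1) ik by (simp add: sorted_nth_mono)
  show ?thesis
  proof (cases "u = v")
    case False
    have "p ! i \<noteq> p ! k"
    proof
      assume eq: "p ! i = p ! k"
      have "card {i, k} \<le> length (filter ((=) (p ! i)) p)"
        by (rule card_le_length_filter) (use ik eq in auto)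
      also have "\<dots> = count (filter_mset (\<lambda>x. snd x = a) (mset p)) (p ! i)"
        using ik by (simp add: count_mset count_list_eq_length_filter)
      moreover have "count (filter_mset (\<lambda>x. snd x = a) (mset p)) (p ! i) = 1"
        using uv False unfolding p(2) by auto
      ultimately show False using ik by simp
    qed
    then have "p ! i < p ! k" using le by simp
    then show ?thesis using uv p(3) by auto
  qed (use uv in auto)
qed

lemma no_three_equal_letters:
  assumes "size (filter_mset (\<lambda>x. snd x = a) (mset p)) = 2"
    and "i < j" "j < k" "k < length p" "snd (p ! i) = a" "snd (p ! j) = a" "snd (p ! k) = a"
  shows False
proof -
  have "card {i, j, k} \<le> length (filter (\<lambda>x. snd x = a) p)"
    by (rule card_le_length_filter) (use assms in auto)
  then show False using assms by (simp flip: size_mset)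
qed

lemma arcs_of_in_arc_diagrams:
  assumes p: "p \<in> coloured_quasi_stirling n m"
  shows "arcs_of {1..n} p \<in> arc_diagrams {1..n} m"
proof -
  define \<phi> where "\<phi> = arcs_of {1..n} p"
  have srt: "sorted p" and qs: "map snd p \<in> quasi_stirling n" and col: "\<forall>x\<in>set p. fst x < m"
    using p by (auto simp: coloured_quasi_stirling_def)
  have keys: "left_key \<phi> a \<in> set p \<and> right_key \<phi> a \<in> set p" if "a \<in> {1..n}" for a
  proof -
    have "left_key \<phi> a \<in># filter_mset (\<lambda>x. snd x = a) (mset p)" "right_key \<phi> a \<in># filter_mset (\<lambda>x. snd x = a) (mset p)"
      using that by (simp_all add: filter_letter_coloured_quasi_stirling[OF p] \<phi>_def)
    then show ?thesis by simp
  qed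
  have arc: "fst (\<phi> a) \<le> snd (\<phi> a)" if "a \<in> {1..n}" for a
  proof -
    have "finite {c. (c, a) \<in> set p}"
      by (rule finite_subset[of _ "fst ` set p"]) force+
    moreover have "fst (\<phi> a) \<in> {c. (c, a) \<in> set p}" using keys[OF that] by (simp add: left_key_def)
    ultimately show ?thesis using that by (auto simp: \<phi>_def arcs_of_def)
  qed
  have "noncrossing {1..n} \<phi>"
    unfolding noncrossing_def
  proof (intro ballI notI)
    fix a b assume ab: "a \<in> {1..n}" "b \<in> {1..n}" and cr: "crosses \<phi> a b"
    obtain i j k l where ijkl: "i < length p" "j < length p" "k < length p" "l < length p"
      "p ! i = left_key \<phi> a" "p ! j = left_key \<phi> b" "p ! k = right_key \<phi> a" "p ! l = right_key \<phi> b"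
      using keys[OF ab(1)] keys[OF ab(2)] by (metis in_set_conv_nth)
    then have "i < j" "j < k" "k < l"
      using cr sorted_nth_less_imp_less[OF srt] unfolding crosses_def by simp_all
    moreover have "map snd p ! i = map snd p ! k" "map snd p ! j = map snd p ! l" "l < length (map snd p)"
      using ijkl by (simp_all add: left_key_def right_key_def)
    ultimately show False using qs unfolding quasi_stirling_def by blast
  qed
  moreover have "snd (\<phi> a) < m" if "a \<in> {1..n}" for a
    using keys[OF that] col by (auto simp: right_key_def)
  ultimately show ?thesis
    using arc by (simp add: arc_diagrams_def \<phi>_def arcs_of_def)
qed

lemma arc_mset_arcs_of:
  assumes p: "p \<in> coloured_quasi_stirling n m"
  shows "arc_mset {1..n} (arcs_of {1..n} p) = mset p"
proof (rule multiset_eqI)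
  fix x
  have "count (arc_mset {1..n} (arcs_of {1..n} p)) x
      = count (filter_mset (\<lambda>y. snd y = snd x) (arc_mset {1..n} (arcs_of {1..n} p))) x"
    by simp
  also have "\<dots> = count (filter_mset (\<lambda>y. snd y = snd x) (mset p)) x"
    by (simp only: filter_arc_mset[OF finite_atLeastAtMost] filter_letter_coloured_quasi_stirling[OF p])
  finally show "count (arc_mset {1..n} (arcs_of {1..n} p)) x = count (mset p) x" by simp
qed

lemma mem_arc_mset:
  assumes "finite L"
  shows "x \<in># arc_mset L \<phi> \<longleftrightarrow> snd x \<in> L \<and> (x = left_key \<phi> (snd x) \<or> x = right_key \<phi> (snd x))"
proof -
  have "x \<in># arc_mset L \<phi> \<longleftrightarrow> x \<in># filter_mset (\<lambda>y. snd y = snd x) (arc_mset L \<phi>)" by simp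
  then show ?thesis by (simp add: filter_arc_mset[OF assms])
qed

lemma arcs_of_arc_mset:
  assumes L: "finite L" and \<phi>: "\<phi> \<in> arc_diagrams L m"
  shows "arcs_of L (sorted_list_of_multiset (arc_mset L \<phi>)) = \<phi>"
proof
  fix a
  have "{c. (c, a) \<in> set (sorted_list_of_multiset (arc_mset L \<phi>))} = {fst (\<phi> a), snd (\<phi> a)}" if "a \<in> L"
    using that by (auto simp: mem_arc_mset[OF L] left_key_def right_key_def)
  then show "arcs_of L (sorted_list_of_multiset (arc_mset L \<phi>)) a = \<phi> a"
    using \<phi> by (auto simp: arcs_of_def arc_diagrams_def max_def min_def)
qed

lemma sorted_arc_mset_no_crossing_pattern:
  assumes L: "finite L" and arc: "\<And>a. a \<in> L \<Longrightarrow> fst (\<phi> a) \<le> snd (\<phi> a)" and nc: "noncrossing L \<phi>"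
  defines "p \<equiv> sorted_list_of_multiset (arc_mset L \<phi>)"
  assumes ijkl: "i < j" "j < k" "k < l" "l < length p" "snd (p ! i) = snd (p ! k)" "snd (p ! j) = snd (p ! l)"
  shows False
proof -
  define a b where "a = snd (p ! i)" and "b = snd (p ! j)"
  have srt: "sorted p" by (simp add: p_def)
  have filter_p: "filter_mset (\<lambda>x. snd x = c) (mset p) = (if c \<in> L then {#left_key \<phi> c, right_key \<phi> c#} else {#})"
    for c by (simp add: p_def filter_arc_mset[OF L])
  have ab: "a \<in> L" "b \<in> L"
    using ijkl nth_mem[of i p] nth_mem[of j p] by (auto simp: a_def b_def p_def mem_arc_mset[OF L])
  have pair: "p ! r = left_key \<phi> c \<and> p ! s = right_key \<phi> c"
    if "r < s" "s < length p" "snd (p ! r) = c" "snd (p ! s) = c" "c \<in> L" for r s c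
  proof -
    have "filter_mset (\<lambda>x. snd x = c) (mset p) = {#left_key \<phi> c, right_key \<phi> c#}"
      using filter_p[of c] that(5) by simp
    moreover have "left_key \<phi> c \<le> right_key \<phi> c"
      using arc[OF that(5)] by (simp add: left_key_def right_key_def)
    ultimately show ?thesis using sorted_nth_letter_pair[OF srt _ _ that(1-4)] by blast
  qed
  show False
  proof (cases "a = b")
    case True
    have "size (filter_mset (\<lambda>x. snd x = a) (mset p)) = 2" using filter_p[of a] ab(1) by simp
    moreover have "i < j" "j < k" "k < length p" using ijkl by auto
    moreover have "snd (p ! i) = a" "snd (p ! j) = a" "snd (p ! k) = a"
      using ijkl True by (simp_all add: a_def b_def)
    ultimately show False by (rule no_three_equal_letters)
  next
    case False
    have "i < k" "k < length p" "j < l" "l < length p" "snd (p ! k) = a" "snd (p ! l) = b"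
      using ijkl by (auto simp: a_def b_def)
    then have "p ! i = left_key \<phi> a" "p ! k = right_key \<phi> a" "p ! j = left_key \<phi> b" "p ! l = right_key \<phi> b"
      using pair[of i k a] pair[of j l b] ab by (auto simp: a_def b_def)
    moreover have "p ! i \<le> p ! j" "p ! j \<le> p ! k" "p ! k \<le> p ! l"
      using srt ijkl by (simp_all add: sorted_nth_mono)
    moreover have "p ! i \<noteq> p ! j" "p ! j \<noteq> p ! k" "p ! k \<noteq> p ! l"
      using False ijkl by (auto simp: a_def b_def)
    ultimately have "crosses \<phi> a b" by (simp add: crosses_def less_le)
    then show False using nc ab unfolding noncrossing_def by blast
  qed
qed

lemma sorted_arc_mset_in_coloured_quasi_stirling:
  assumes \<phi>: "\<phi> \<in> arc_diagrams {1..n} m"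
  shows "sorted_list_of_multiset (arc_mset {1..n} \<phi>) \<in> coloured_quasi_stirling n m"
proof -
  define L where "L = {1..n :: nat}"
  define p where "p = sorted_list_of_multiset (arc_mset L \<phi>)"
  have L: "finite L" by (simp add: L_def)
  have arc: "fst (\<phi> a) \<le> snd (\<phi> a)" "snd (\<phi> a) < m" if "a \<in> L" for a
    using \<phi> that by (auto simp: arc_diagrams_def L_def)
  have "mset (map snd p) = mset [1..<n+1] + mset [1..<n+1]"
  proof (rule multiset_eqI)
    fix a
    have "count (mset (map snd p)) a = size (filter_mset (\<lambda>x. snd x = a) (mset p))"
      by (simp add: count_image_mset_eq_size_filter)
    moreover have "count (mset [1..<n+1] + mset [1..<n+1]) a = (if a \<in> L then 2 else 0)"
      by (auto simp: L_def)
    ultimately show "count (mset (map snd p)) a = count (mset [1..<n+1] + mset [1..<n+1]) a"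
      by (simp add: p_def filter_arc_mset[OF L])
  qed
  moreover have "\<not> (i < j \<and> j < k \<and> k < l \<and> l < length p \<and>
      snd (p ! i) = snd (p ! k) \<and> snd (p ! j) = snd (p ! l))" for i j k l
    using sorted_arc_mset_no_crossing_pattern[OF L, of \<phi> i j k l] arc(1) \<phi>
    by (auto simp: p_def arc_diagrams_def L_def)
  moreover have "\<forall>x\<in>set p. fst x < m"
    using arc by (force simp: p_def mem_arc_mset[OF L] left_key_def right_key_def)
  ultimately show ?thesis
    unfolding coloured_quasi_stirling_def quasi_stirling_def p_def L_def by auto
qed

lemma card_coloured_quasi_stirling: "card (coloured_quasi_stirling n m) = card (arc_diagrams {1..n} m)"
proof (rule bij_betw_same_card[of "arcs_of {1..n}"],
       rule bij_betw_byWitness[where f' = "\<lambda>\<phi>. sorted_list_of_multiset (arc_mset {1..n} \<phi>)"])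
  show "\<forall>p\<in>coloured_quasi_stirling n m. sorted_list_of_multiset (arc_mset {1..n} (arcs_of {1..n} p)) = p"
  proof
    fix p assume p: "p \<in> coloured_quasi_stirling n m"
    then have "sorted p" by (simp add: coloured_quasi_stirling_def)
    then show "sorted_list_of_multiset (arc_mset {1..n} (arcs_of {1..n} p)) = p"
      unfolding arc_mset_arcs_of[OF p] by (simp add: sorted_sort_id)
  qed
  show "\<forall>\<phi>\<in>arc_diagrams {1..n} m. arcs_of {1..n} (sorted_list_of_multiset (arc_mset {1..n} \<phi>)) = \<phi>"
    using arcs_of_arc_mset[OF finite_atLeastAtMost] by blast
  show "arcs_of {1..n} ` coloured_quasi_stirling n m \<subseteq> arc_diagrams {1..n} m"
    using arcs_of_in_arc_diagrams by blast
  show "(\<lambda>\<phi>. sorted_list_of_multiset (arc_mset {1..n} \<phi>)) ` arc_diagrams {1..n} m \<subseteq> coloured_quasi_stirling n m"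
    using sorted_arc_mset_in_coloured_quasi_stirling by blast
qed

section \<open>The generating function\<close>

lemma weighted_binomial_series_power: "weighted_binomial_series 1 0 ^ k = weighted_binomial_series k 0"
proof (induction k)
  case (Suc k)
  have "weighted_binomial_series 1 0 * weighted_binomial_series k 0 = weighted_binomial_series (k + 1) 0"
    using weighted_binomial_series_convolution[where j = 0 and k = k] by simp
  then show ?case using Suc by simp
qed (simp add: weighted_binomial_series_0)

lemma inverse_one_minus_X_power:
  "inverse ((1 - fps_X :: rat fps) ^ (N + 1)) = Abs_fps (\<lambda>m. of_nat ((m + N) choose m))"
proof -
  have "inverse ((1 - fps_X :: rat fps) ^ (N + 1)) = inverse (1 - fps_X) ^ (N + 1)"
    by (rule fps_inverse_power)
  also have "inverse (1 - fps_X :: rat fps) = weighted_binomial_series 1 0"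
    by (simp add: fps_inverse_one_minus_fps_X weighted_binomial_series_def)
  finally show ?thesis
    by (simp only: weighted_binomial_series_power) (simp add: weighted_binomial_series_def)
qed

lemma Qbar_divide_nth:
  "(Qbar n / (1 - fps_X) ^ (2 * n + 1)) $ m = of_nat (\<Sum>w\<in>quasi_stirling n. card (colourings w m))"
proof -
  define P where "P = Abs_fps (\<lambda>k. of_nat ((k + 2 * n) choose k) :: rat)"
  have "Qbar n / (1 - fps_X) ^ (2 * n + 1) = Qbar n * P"
    using inverse_one_minus_X_power[of "2 * n"] by (simp add: fps_divide_unit P_def)
  then have "(Qbar n / (1 - fps_X) ^ (2 * n + 1)) $ m = (\<Sum>w\<in>quasi_stirling n. (fps_X ^ des w * P) $ m)"
    by (simp add: Qbar_def sum_distrib_right fps_sum_nth)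
  also have "\<dots> = (\<Sum>w\<in>quasi_stirling n. of_nat (card (colourings w m)))"
  proof (intro sum.cong refl)
    fix w assume "w \<in> quasi_stirling n"
    then show "(fps_X ^ des w * P) $ m = of_nat (card (colourings w m))"
      using binomial_symmetric[of "m - des w" "m + 2 * n - des w"]
      by (simp add: card_colourings length_quasi_stirling fps_X_power_mult_nth P_def not_less add.commute)
  qed
  finally show ?thesis by simp
qed

theorem theorem2p5:
  fixes n :: nat
  shows "Abs_fps (\<lambda>m. (of_nat m) ^ n / of_nat (n + 1) * of_nat ((m + n) choose m) :: rat)
           = Qbar n / (1 - fps_X) ^ (2 * n + 1)"
proof (rule fps_ext)
  fix m
  have "(Qbar n / (1 - fps_X) ^ (2 * n + 1)) $ m = of_nat (card (arc_diagrams {1..n} m))"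
    by (simp only: Qbar_divide_nth sum_card_colourings card_coloured_quasi_stirling)
  also have "\<dots> = arc_count n m" by (simp add: card_arc_diagrams)
  finally show "Abs_fps (\<lambda>m. (of_nat m) ^ n / of_nat (n + 1) * of_nat ((m + n) choose m) :: rat) $ m
      = (Qbar n / (1 - fps_X) ^ (2 * n + 1)) $ m"
    by (simp add: arc_count_def add.commute)
qed

end
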